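(* Consider the iterates of the partially Jacobi 3-block algorithm (context) and fix $k\ge0$ with $\eta_k\in(0,1/\nu)$. Then for every $w=(x;y;z;\lambda)\in\Omega$, $$F(w)-F(\tilde w^k)+\langle w-\tilde w^k,\mathcal J(w)\rangle\ge(w-\tilde w^k)^\top Q_k(w^k-\tilde w^k)+\zeta^k(x),$$ where $$Q_k=\begin{bmatrix}\mathcal D_k&0&0&0\\0&L_1+\beta B^\top B&0&-\tau B^\top\\0&0&L_2+\beta C^\top C&-\tau C^\top\\0&-B&-C&\frac1\beta I\end{bmatrix}.$$
   Context: Setting. $\mathcal X\subset\mathbb R^{n_1}$, $\mathcal Y\subset\mathbb R^{n_2}$, $\mathcal Z\subset\mathbb R^{n_3}$ are nonempty closed convex sets; $A\in\mathbb R^{n\times n_1}$, $B\in\mathbb R^{n\times n_2}$, $C\in\mathbb R^{n\times n_3}$, $b\in\mathbb R^n$; $g:\mathcal Y\to\mathbb R\cup\{+\infty\}$ and $l:\mathcal Z\to\mathbb R\cup\{+\infty\}$ are proper closed convex; $f=\frac1N\sum_{j=1}^Nf_j$, each $f_j$ real-valued, convex and continuously differentiable on an open set containing $\mathcal X$. Problem: $\min\{f(x)+g(y)+l(z): Ax+By+Cz=b,\ x\in\mathcal X,y\in\mathcal Y,z\in\mathcal Z\}$. A fixed symmetric positive definite $H$ and $\nu>0$ satisfy $\|\nabla f_j(x_1)-\nabla f_j(x_2)\|_{H^{-1}}\le\nu\|x_1-x_2\|_H$ for all $x_1,x_2\in\mathcal X$, all $j$. For symmetric $G$, $\|v\|_G^2:=v^\top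 Gv$; $G_1\succeq G_2$ means $G_1-G_2$ is positive semidefinite. $\Delta:=\{(\tau,s):\tau+s>0,\ \tau\le1,\ -\tau^2-s^2-\tau s+\tau+s+1\ge0\}$. Subroutine xsub. Inputs: $x^k\in\mathcal X$, $\breve x^k$, $h\in\mathbb R^{n_1}$, an integer $m_k\ge1$, $\eta_k>0$, a symmetric matrix $M_k$. Set $x_1=x^k$, $\breve x_1=\breve x^k$. For $t=1,\dots,m_k$: draw $\xi_t$ uniformly from $\{1,\dots,N\}$, independently of everything generated before; set $\beta_t=2/(t+1)$, $\gamma_t=2/(t\eta_k)$, $\hat x_t=\beta_t\breve x_t+(1-\beta_t)x_t$, $d_t=\nabla f_{\xi_t}(\hat x_t)+e_t$ where $e_t$ is a random vector whose conditional expectation given all previously generated random quantities and $\xi_t$ is $0$; $\breve x_{t+1}=\arg\min_{x\in\mathcal X}\{\langle d_t+h,x\rangle+\frac{\gamma_t}2\|x-\breve x_t\|_H^2+\frac12\|x-x^k\|_{M_k}^2\}$; $x_{t+1}=\beta_t\breve x_{t+1}+(1-\beta_t)x_t$. Output $x^{k+1}=x_{m_k+1}$, $\breve x^{k+1}=\breve x_{m_k+1}$. Put $\delta_t=\nabla f(\hat x_t)-d_t$ (inner quantities of outer iteration $k$), and for $x\in\mathcal X$ $$\zeta^k(x)=\frac{2}{m_k(m_k+1)}\Big[\frac1{\eta_k}\big(\|x-\breve x^{k+1}\|_H^2-\|x-\breve x^k\|_H^2\big)-\sum_{t=1}^{m_k}t\langle\delta_t,\breve x_t-x\rangle-\frac{\eta_k}{4(1-\eta_k\nu)}\sum_{t=1}^{m_k}t^2\|\delta_t\|_{H^{-1}}^2\Big].$$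 Partially Jacobi 3-block algorithm. Parameters: $\beta>0$, $H$, $(\tau,s)\in\Delta$, symmetric matrices $L_1\in\mathbb R^{n_2\times n_2}$, $L_2\in\mathbb R^{n_3\times n_3}$. Start: $(x^0,y^0,z^0,\lambda^0)\in\mathcal X\times\mathcal Y\times\mathcal Z\times\mathbb R^n$, $\breve x^0=x^0$. For $k=0,1,\dots$: choose integer $m_k\ge1$, $\eta_k>0$, symmetric $M_k$ with $\mathcal D_k:=M_k-\beta A^\top A\succeq0$; $h^k=-A^\top[\lambda^k-\beta(Ax^k+By^k+Cz^k-b)]$; $(x^{k+1},\breve x^{k+1})$ from xsub with inputs $x^k,\breve x^k,h^k,m_k,\eta_k,M_k$; $\lambda^{k+1/2}=\lambda^k-\tau\beta(Ax^{k+1}+By^k+Cz^k-b)$; $y^{k+1}\in\arg\min_{y\in\mathcal Y}g(y)+\frac\beta2\|Ax^{k+1}+By+Cz^k-b-\lambda^{k+1/2}/\beta\|^2+\frac12\|y-y^k\|_{L_1}^2$; $z^{k+1}\in\arg\min_{z\in\mathcal Z}l(z)+\frac\beta2\|Ax^{k+1}+By^k+Cz-b-\lambda^{k+1/2}/\beta\|^2+\frac12\|z-z^k\|_{L_2}^2$; $\lambda^{k+1}=\lambda^{k+1/2}-s\beta(Ax^{k+1}+By^{k+1}+Cz^{k+1}-b)$. (Minimizers are assumed to exist.) Notation. $\Omega=\mathcal X\times\mathcal Y\times\mathcal Z\times\mathbb R^n$; $w=(x;y;z;\lambda)$; $\mathcal Kw=Ax+By+Cz$; $F(w)=f(x)+g(y)+l(z)$;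 $\mathcal J(w)=(-A^\top\lambda;-B^\top\lambda;-C^\top\lambda;\mathcal Kw-b)$; $w^k=(x^k;y^k;z^k;\lambda^k)$; $\tilde\lambda^k=\lambda^k-\beta(Ax^{k+1}+By^k+Cz^k-b)$; $\tilde w^k=(x^{k+1};y^{k+1};z^{k+1};\tilde\lambda^k)$. *)

theory Defs
  imports "HOL-Analysis.Analysis"
begin

definition qn :: "real^'n^'n \<Rightarrow> real^'n \<Rightarrow> real" where
  "qn G v = v \<bullet> (G *v v)"

definition gnorm :: "real^'n^'n \<Rightarrow> real^'n \<Rightarrow> real" where
  "gnorm G v = sqrt (qn G v)"

definition symmetric_mat :: "real^'n^'n \<Rightarrow> bool" where
  "symmetric_mat G \<longleftrightarrow> transpose G = G"

definition psd :: "real^'n^'n \<Rightarrow> bool" where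
  "psd G \<longleftrightarrow> (\<forall>v. 0 \<le> qn G v)"

definition posdef :: "real^'n^'n \<Rightarrow> bool" where
  "posdef G \<longleftrightarrow> symmetric_mat G \<and> (\<forall>v. v \<noteq> 0 \<longrightarrow> 0 < qn G v)"

definition Delta :: "(real \<times> real) set" where
  "Delta = {(\<tau>, s). \<tau> + s > 0 \<and> \<tau> \<le> 1 \<and> - (\<tau> ^ 2) - (s ^ 2) - \<tau> * s + \<tau> + s + 1 \<ge> 0}"

definition fbar :: "nat \<Rightarrow> (nat \<Rightarrow> 'a \<Rightarrow> real) \<Rightarrow> 'a \<Rightarrow> real" where
  "fbar N fj u = (1 / real N) * (\<Sum>j=1..N. fj j u)"

definition gradf :: "nat \<Rightarrow> (nat \<Rightarrow> 'a \<Rightarrow> 'b::real_vector) \<Rightarrow> 'a \<Rightarrow> 'b" where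
  "gradf N gj u = (1 / real N) *\<^sub>R (\<Sum>j=1..N. gj j u)"

definition betaT :: "nat \<Rightarrow> real" where "betaT t = 2 / (real t + 1)"
definition gammaT :: "real \<Rightarrow> nat \<Rightarrow> real" where "gammaT \<eta> t = 2 / (real t * \<eta>)"

definition xhat :: "(nat \<Rightarrow> real^'n) \<Rightarrow> (nat \<Rightarrow> real^'n) \<Rightarrow> nat \<Rightarrow> real^'n" where
  "xhat xs xbs t = betaT t *\<^sub>R xbs t + (1 - betaT t) *\<^sub>R xs t"

definition xsub_obj :: "real^'n^'n \<Rightarrow> real^'n^'n \<Rightarrow> real \<Rightarrow> real^'n \<Rightarrow> real^'n \<Rightarrow> real^'n
    \<Rightarrow> real^'n \<Rightarrow> real" where
  "xsub_obj H Mk \<gamma> dh xbt xk u = dh \<bullet> u + \<gamma> / 2 * qn H (u - xbt) + 1/2 * qn Mk (u - xk)"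

text \<open>The error term \<open>\<zeta>^k(x)\<close>; \<open>\<delta>\<close> and \<open>xbs\<close> are the inner sequences of iteration k.\<close>
definition zeta :: "real^'n^'n \<Rightarrow> real \<Rightarrow> real \<Rightarrow> nat \<Rightarrow> real^'n \<Rightarrow> real^'n
    \<Rightarrow> (nat \<Rightarrow> real^'n) \<Rightarrow> (nat \<Rightarrow> real^'n) \<Rightarrow> real^'n \<Rightarrow> real" where
  "zeta H \<nu> \<eta> m xbk xbk1 \<delta> xbs x =
     2 / (real m * (real m + 1)) *
       ((1 / \<eta>) * (qn H (x - xbk1) - qn H (x - xbk))
        - (\<Sum>t=1..m. real t * (\<delta> t \<bullet> (xbs t - x)))
        - \<eta> / (4 * (1 - \<eta> * \<nu>)) * (\<Sum>t=1..m. (real t)^2 * qn (matrix_inv H) (\<delta> t)))"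

definition Jop :: "real^'n1^'m \<Rightarrow> real^'n2^'m \<Rightarrow> real^'n3^'m \<Rightarrow> real^'m
    \<Rightarrow> (real^'n1) \<times> (real^'n2) \<times> (real^'n3) \<times> (real^'m) \<Rightarrow> (real^'n1) \<times> (real^'n2) \<times> (real^'n3) \<times> (real^'m)" where
  "Jop A B C b w = (case w of (x, y, z, lm) \<Rightarrow>
     (- (transpose A *v lm), - (transpose B *v lm), - (transpose C *v lm), A *v x + B *v y + C *v z - b))"

definition Fobj :: "(real^'n1 \<Rightarrow> real) \<Rightarrow> (real^'n2 \<Rightarrow> ereal) \<Rightarrow> (real^'n3 \<Rightarrow> ereal)
    \<Rightarrow> (real^'n1) \<times> (real^'n2) \<times> (real^'n3) \<times> (real^'m) \<Rightarrow> ereal" where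
  "Fobj f g l w = (case w of (x, y, z, lm) \<Rightarrow> ereal (f x) + g y + l z)"

text \<open>\<open>Qmul ... v = Q_k v\<close> for the block matrix
  \<open>Q_k = [[D,0,0,0],[0,L1+\<beta>B^TB,0,-\<tau>B^T],[0,0,L2+\<beta>C^TC,-\<tau>C^T],[0,-B,-C,I/\<beta>]]\<close>.\<close>
definition Qmul :: "real^'n1^'n1 \<Rightarrow> real^'n2^'n2 \<Rightarrow> real^'n3^'n3 \<Rightarrow> real^'n2^'m \<Rightarrow> real^'n3^'m
    \<Rightarrow> real \<Rightarrow> real \<Rightarrow> (real^'n1) \<times> (real^'n2) \<times> (real^'n3) \<times> (real^'m)
    \<Rightarrow> (real^'n1) \<times> (real^'n2) \<times> (real^'n3) \<times> (real^'m)" where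
  "Qmul D L1 L2 B C \<beta> \<tau> v = (case v of (x, y, z, lm) \<Rightarrow>
     (D *v x,
      (L1 + \<beta> *\<^sub>R (transpose B ** B)) *v y - \<tau> *\<^sub>R (transpose B *v lm),
      (L2 + \<beta> *\<^sub>R (transpose C ** C)) *v z - \<tau> *\<^sub>R (transpose C *v lm),
      - (B *v y) - (C *v z) + (1 / \<beta>) *\<^sub>R lm))"

definition proper_closed_convex :: "'a::real_normed_vector set \<Rightarrow> ('a \<Rightarrow> ereal) \<Rightarrow> bool" where
  "proper_closed_convex S g \<longleftrightarrow>
     (\<exists>y\<in>S. g y \<noteq> \<infinity>) \<and> (\<forall>y\<in>S. g y \<noteq> - \<infinity>) \<and>
     (\<forall>y1\<in>S. \<forall>y2\<in>S. \<forall>u::real. 0 \<le> u \<and> u \<le> 1 \<longrightarrow>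
        g (u *\<^sub>R y1 + (1 - u) *\<^sub>R y2) \<le> ereal u * g y1 + ereal (1 - u) * g y2) \<and>
     closed {(y, t::real). y \<in> S \<and> g y \<le> ereal t}"

end

theory Submission
  imports Defs
begin

(* The x-update is an accelerated stochastic gradient method for the potential
   f(u) + <h, u> + |u - x^k|_M^2 / 2.  Each inner step combines the descent lemma at the
   extrapolated point, convexity of f and the three-point property of the proximal step; with
   beta_t = 2/(t+1) the step inequalities telescope, and what the gradient errors delta_t leave
   behind is exactly zeta^k(x).  The y- and z-updates are proximal steps, so their first-order
   optimality conditions are subgradient inequalities for g and l.  Adding the three inequalities
   and expressing the multiplier terms through lambda-tilde^k produces the rows of Q_k; the
   remaining terms equal <w - w-tilde^k, J(w)> because the linear part of J is skew-symmetric. *)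

section \<open>Quadratic forms\<close>

lemma transpose_mult_inner: "(transpose A *v u) \<bullet> v = u \<bullet> (A *v (v::real^'n))"
  by (simp add: dot_lmul_matrix)

lemma inner_transpose_mult: "u \<bullet> (transpose A *v v) = v \<bullet> (A *v (u::real^'n))"
  by (metis transpose_mult_inner inner_commute)

lemma symmetric_mat_inner_commute:
  "symmetric_mat H \<Longrightarrow> u \<bullet> (H *v v) = v \<bullet> (H *v (u::real^'n))"
  by (metis inner_transpose_mult symmetric_mat_def)

lemma qn_scaleR: "qn G (a *\<^sub>R u) = a\<^sup>2 * qn G u"
  by (simp add: qn_def matrix_vector_mult_scaleR power2_eq_square)

lemma qn_add:
  "symmetric_mat G \<Longrightarrow> qn G (u + v) = qn G u + 2 * (u \<bullet> (G *v v)) + qn G v"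
  unfolding qn_def using symmetric_mat_inner_commute[of G u v]
  by (simp add: matrix_vector_right_distrib inner_add_left inner_add_right)

lemma qn_diff:
  "symmetric_mat G \<Longrightarrow> qn G (u - v) = qn G u - 2 * (u \<bullet> (G *v v)) + qn G v"
  unfolding qn_def using symmetric_mat_inner_commute[of G u v]
  by (simp add: matrix_vector_mult_diff_distrib inner_diff_left inner_diff_right)

lemma qn_diff_scaleR_mat: "qn (P - c *\<^sub>R R) v = qn P v - c * qn R v"
  by (simp add: qn_def matrix_vector_mult_diff_rdistrib scaleR_matrix_vector_assoc[symmetric]
      inner_diff_right)

lemma qn_transpose_mult: "qn (transpose A ** A) v = (norm (A *v (v::real^'n)))\<^sup>2"
  by (simp add: qn_def matrix_vector_mul_assoc[symmetric] power2_norm_eq_inner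
      transpose_mult_inner[of A, symmetric] inner_commute)

lemma psd_qn_nonneg: "psd G \<Longrightarrow> 0 \<le> qn G v"
  by (simp add: psd_def)

lemma posdef_imp_psd: "posdef G \<Longrightarrow> psd G"
  unfolding posdef_def psd_def by (metis order_refl less_imp_le qn_def inner_zero_left)

lemma posdef_imp_symmetric: "posdef G \<Longrightarrow> symmetric_mat G"
  by (simp add: posdef_def)

lemma psd_of_psd_diff:
  assumes "psd (M - \<beta> *\<^sub>R (transpose A ** A))" and "0 \<le> \<beta>"
  shows "psd M"
  using assms unfolding psd_def qn_diff_scaleR_mat qn_transpose_mult
  by (smt (verit) zero_le_mult_iff zero_le_power2)

lemma qn_convex:
  assumes "symmetric_mat M" and "psd M" and "0 \<le> b" "b \<le> 1"
  shows "qn M (b *\<^sub>R q + (1 - b) *\<^sub>R p) \<le> b * qn M q + (1 - b) * qn M p"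
proof -
  define c where "c = p \<bullet> (M *v (q - p))"
  have expand: "qn M (p + a *\<^sub>R (q - p)) = qn M p + 2 * a * c + a\<^sup>2 * qn M (q - p)" for a
    unfolding c_def using qn_add[OF assms(1), of p "a *\<^sub>R (q - p)"] qn_scaleR[of M a "q - p"]
    by (simp add: matrix_vector_mult_scaleR)
  have "b\<^sup>2 * qn M (q - p) \<le> b * qn M (q - p)"
    using assms(3,4) psd_qn_nonneg[OF assms(2)]
    by (intro mult_right_mono) (auto simp: power2_eq_square mult_left_le)
  moreover have "b *\<^sub>R q + (1 - b) *\<^sub>R p = p + b *\<^sub>R (q - p)" "q = p + 1 *\<^sub>R (q - p)"
    by (simp_all add: algebra_simps)
  ultimately show ?thesis
    using expand[of b] expand[of 1] by (simp add: algebra_simps)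
qed

lemma posdef_invertible:
  assumes "posdef (H::real^'n^'n)"
  shows "invertible H"
proof -
  have "inj ((*v) H)"
  proof (rule injI)
    fix u v assume "H *v u = H *v v"
    hence "qn H (u - v) = 0" by (simp add: qn_def matrix_vector_mult_diff_distrib)
    thus "u = v" using assms unfolding posdef_def by (metis less_irrefl eq_iff_diff_eq_0)
  qed
  then obtain B where "B ** H = mat 1" using matrix_left_invertible_injective by blast
  thus ?thesis using invertible_left_inverse by blast
qed

lemma posdef_mult_matrix_inv:
  assumes "posdef (H::real^'n^'n)"
  shows "H *v (matrix_inv H *v a) = a"
proof -
  have "H ** matrix_inv H = mat 1"
    using posdef_invertible[OF assms] unfolding invertible_def matrix_inv_def
    by (rule someI_ex[where P="\<lambda>A'. H ** A' = mat 1 \<and> A' ** H = mat 1", THEN conjunct1])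
  thus ?thesis by (metis matrix_vector_mul_assoc matrix_vector_mul_lid)
qed

lemma qn_matrix_inv:
  assumes "posdef (H::real^'n^'n)"
  shows "qn (matrix_inv H) a = qn H (matrix_inv H *v a)"
  using posdef_mult_matrix_inv[OF assms, of a] by (simp add: qn_def inner_commute)

lemma qn_matrix_inv_nonneg: "posdef (H::real^'n^'n) \<Longrightarrow> 0 \<le> qn (matrix_inv H) a"
  using qn_matrix_inv posdef_imp_psd psd_qn_nonneg by metis

text \<open>Young's inequality in the dual pair of norms \<open>\<parallel>\<cdot>\<parallel>\<^sub>H\<close>, \<open>\<parallel>\<cdot>\<parallel>\<^sub>H\<^sup>-\<^sup>1\<close>; it comes from
  expanding \<open>\<parallel>d - H\<^sup>-\<^sup>1a / (2c)\<parallel>\<^sub>H\<^sup>2 \<ge> 0\<close>.\<close>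
lemma inner_le_qn_young:
  assumes H: "posdef (H::real^'n^'n)" and c: "c > 0"
  shows "a \<bullet> d - c * qn H d \<le> qn (matrix_inv H) a / (4 * c)"
proof -
  define v where "v = matrix_inv H *v a"
  have "0 \<le> qn H (d - (1 / (2 * c)) *\<^sub>R v)"
    using posdef_imp_psd[OF H] by (rule psd_qn_nonneg)
  also have "\<dots> = qn H d - (1 / c) * (d \<bullet> a) + (1 / (2 * c))\<^sup>2 * qn (matrix_inv H) a"
    using qn_diff[OF posdef_imp_symmetric[OF H], of d "(1 / (2 * c)) *\<^sub>R v"]
      qn_scaleR[of H "1 / (2 * c)" v] qn_matrix_inv[OF H, of a]
    by (simp add: matrix_vector_mult_scaleR posdef_mult_matrix_inv[OF H] v_def)
  finally have "0 \<le> c * (qn H d - (1 / c) * (d \<bullet> a) + (1 / (2 * c))\<^sup>2 * qn (matrix_inv H) a)"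
    using c by simp
  also have "\<dots> = c * qn H d - d \<bullet> a + qn (matrix_inv H) a / (4 * c)"
    using c by (simp add: field_simps power2_eq_square)
  finally show ?thesis by (simp add: inner_commute)
qed

lemma inner_le_of_gnorm_le:
  assumes H: "posdef (H::real^'n^'n)" and r: "r > 0"
    and bound: "gnorm (matrix_inv H) a \<le> r * gnorm H w"
  shows "a \<bullet> w \<le> r * qn H w"
proof -
  have qw: "0 \<le> qn H w" using posdef_imp_psd[OF H] by (rule psd_qn_nonneg)
  have "qn (matrix_inv H) a \<le> (r * sqrt (qn H w))\<^sup>2"
    using bound qn_matrix_inv_nonneg[OF H, of a] r qw unfolding gnorm_def
    by (metis real_sqrt_le_iff real_sqrt_unique zero_le_mult_iff less_imp_le real_sqrt_ge_zero
        real_sqrt_le_mono)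
  hence Q: "qn (matrix_inv H) a \<le> r\<^sup>2 * qn H w"
    using qw by (simp add: power_mult_distrib)
  have "a \<bullet> w \<le> r / 2 * qn H w + qn (matrix_inv H) a / (4 * (r / 2))"
    using inner_le_qn_young[OF H, of "r / 2" a w] r by simp
  also have "\<dots> \<le> r / 2 * qn H w + r\<^sup>2 * qn H w / (4 * (r / 2))"
    using Q r by (simp add: divide_right_mono)
  also have "\<dots> = r * qn H w"
    using r by (simp add: field_simps power2_eq_square)
  finally show ?thesis .
qed


section \<open>Convex functions with Lipschitz gradient\<close>

lemma has_real_derivative_along_line:
  fixes f :: "real^'n \<Rightarrow> real"
  assumes "(f has_derivative (\<lambda>h. g \<bullet> h)) (at (x + s *\<^sub>R w))"
  shows "((\<lambda>s. f (x + s *\<^sub>R w)) has_real_derivative (g \<bullet> w)) (at s)"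
proof -
  have "((\<lambda>s. x + s *\<^sub>R w) has_derivative (\<lambda>h. h *\<^sub>R w)) (at s)"
    by (auto intro!: derivative_eq_intros)
  from has_derivative_compose[OF this assms]
  have "((\<lambda>s. f (x + s *\<^sub>R w)) has_derivative (\<lambda>h. g \<bullet> (h *\<^sub>R w))) (at s)" .
  moreover have "(\<lambda>h. g \<bullet> (h *\<^sub>R w)) = (*) (g \<bullet> w)" by (auto simp: fun_eq_iff)
  ultimately show ?thesis by (simp add: has_field_derivative_def)
qed

lemma convex_on_gradient_ineq:
  fixes f :: "real^'n \<Rightarrow> real"
  assumes cv: "convex_on X f" and u: "u \<in> X" and v: "v \<in> X"
    and d: "(f has_derivative (\<lambda>h. G \<bullet> h)) (at u)"
  shows "f u + G \<bullet> (v - u) \<le> f v"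
proof -
  define w where "w = v - u"
  have "((\<lambda>s. f (u + s *\<^sub>R w)) has_real_derivative (G \<bullet> w)) (at 0)"
    using has_real_derivative_along_line[of f G u 0 w] d by simp
  hence lim: "((\<lambda>s. (f (u + s *\<^sub>R w) - f u) / s) \<longlongrightarrow> G \<bullet> w) (at_right 0)"
    unfolding has_field_derivative_iff by (auto intro: tendsto_mono[OF at_le])
  have "(f (u + s *\<^sub>R w) - f u) / s \<le> f v - f u" if s: "s \<in> {0<..<(1::real)}" for s
  proof -
    have "u + s *\<^sub>R w = (1 - s) *\<^sub>R u + s *\<^sub>R v" by (simp add: w_def algebra_simps)
    hence "f (u + s *\<^sub>R w) \<le> (1 - s) * f u + s * f v"
      using convex_onD[OF cv, of s u v] s u v by auto
    hence "f (u + s *\<^sub>R w) - f u \<le> s * (f v - f u)" by (simp add: algebra_simps)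
    thus ?thesis using s by (simp add: divide_le_eq mult.commute)
  qed
  hence "eventually (\<lambda>s. (f (u + s *\<^sub>R w) - f u) / s \<le> f v - f u) (at_right 0)"
    by (intro eventually_mono[OF eventually_at_right_real[of 0 1]]) auto
  from tendsto_le[OF trivial_limit_at_right_real tendsto_const lim this]
  show ?thesis by (simp add: w_def)
qed

text \<open>The descent lemma: along the segment from \<open>x1\<close> to \<open>x2\<close> the function
  \<open>f - \<langle>G x1, \<cdot>\<rangle> - \<nu>/2 \<parallel>\<cdot> - x1\<parallel>\<^sub>H\<^sup>2\<close> has nonpositive derivative.\<close>
lemma descent_lemma:
  fixes f :: "real^'n \<Rightarrow> real"
  assumes cX: "convex X" and XU: "X \<subseteq> U" and x1: "x1 \<in> X" and x2: "x2 \<in> X"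
    and d: "\<forall>u\<in>U. (f has_derivative (\<lambda>h. G u \<bullet> h)) (at u)"
    and H: "posdef H" and nu: "\<nu> > 0"
    and Lip: "\<forall>a\<in>X. \<forall>b\<in>X. gnorm (matrix_inv H) (G a - G b) \<le> \<nu> * gnorm H (a - b)"
  shows "f x2 \<le> f x1 + G x1 \<bullet> (x2 - x1) + \<nu> / 2 * qn H (x2 - x1)"
proof -
  define w where "w = x2 - x1"
  define \<psi> where "\<psi> s = f (x1 + s *\<^sub>R w) - s * (G x1 \<bullet> w) - \<nu> / 2 * s\<^sup>2 * qn H w" for s
  have "\<psi> 1 \<le> \<psi> 0"
  proof (rule DERIV_nonpos_imp_nonincreasing[of 0 1 \<psi>], simp)
    fix s :: real assume s: "0 \<le> s" "s \<le> 1"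
    have "x1 + s *\<^sub>R w = (1 - s) *\<^sub>R x1 + s *\<^sub>R x2" by (simp add: w_def algebra_simps)
    hence mem: "x1 + s *\<^sub>R w \<in> X" using cX x1 x2 s by (simp add: convex_def)
    have D1: "((\<lambda>s. f (x1 + s *\<^sub>R w)) has_real_derivative (G (x1 + s *\<^sub>R w) \<bullet> w)) (at s)"
      using has_real_derivative_along_line[of f "G (x1 + s *\<^sub>R w)" x1 s w] d mem XU by auto
    have D: "(\<psi> has_real_derivative (G (x1 + s *\<^sub>R w) \<bullet> w - G x1 \<bullet> w - \<nu> * s * qn H w)) (at s)"
      unfolding \<psi>_def[abs_def] by (rule derivative_eq_intros D1 refl | simp)+
    have "(G (x1 + s *\<^sub>R w) - G x1) \<bullet> w \<le> \<nu> * s * qn H w"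
    proof (cases "s = 0")
      case False
      have "gnorm H (s *\<^sub>R w) = s * gnorm H w"
        using s by (simp add: gnorm_def qn_scaleR real_sqrt_mult)
      moreover have "gnorm (matrix_inv H) (G (x1 + s *\<^sub>R w) - G x1) \<le> \<nu> * gnorm H (s *\<^sub>R w)"
        using Lip mem x1 by (metis add_diff_cancel_left')
      ultimately have "gnorm (matrix_inv H) (G (x1 + s *\<^sub>R w) - G x1) \<le> (\<nu> * s) * gnorm H w"
        by simp
      moreover have "\<nu> * s > 0" using nu s False by simp
      ultimately show ?thesis using inner_le_of_gnorm_le[OF H] by blast
    qed simp
    thus "\<exists>y. (\<psi> has_real_derivative y) (at s) \<and> y \<le> 0"
      using D by (intro exI[of _ "G (x1 + s *\<^sub>R w) \<bullet> w - G x1 \<bullet> w - \<nu> * s * qn H w"])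
        (auto simp: inner_diff_left)
  qed
  thus ?thesis unfolding \<psi>_def w_def by simp
qed

lemma fbar_gradient_ineq:
  assumes "\<forall>j\<in>{1..N}. fj j u + gj j u \<bullet> (v - u) \<le> fj j v"
  shows "fbar N fj u + gradf N gj u \<bullet> (v - u) \<le> fbar N fj v"
proof -
  have "fbar N fj u + gradf N gj u \<bullet> (v - u) = (1 / real N) * (\<Sum>j=1..N. fj j u + gj j u \<bullet> (v - u))"
    by (simp add: fbar_def gradf_def inner_sum_left sum.distrib distrib_left)
  also have "\<dots> \<le> (1 / real N) * (\<Sum>j=1..N. fj j v)"
    using assms by (intro mult_left_mono sum_mono) auto
  finally show ?thesis by (simp add: fbar_def)
qed

lemma fbar_descent_ineq:
  assumes "N \<ge> 1" and "\<forall>j\<in>{1..N}. fj j v \<le> fj j u + gj j u \<bullet> (v - u) + c"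
  shows "fbar N fj v \<le> fbar N fj u + gradf N gj u \<bullet> (v - u) + c"
proof -
  have "fbar N fj v \<le> (1 / real N) * (\<Sum>j=1..N. fj j u + gj j u \<bullet> (v - u) + c)"
    unfolding fbar_def using assms(2) by (intro mult_left_mono sum_mono) auto
  also have "\<dots> = fbar N fj u + gradf N gj u \<bullet> (v - u) + c"
    using assms(1) by (simp add: fbar_def gradf_def inner_sum_left sum.distrib distrib_left)
  finally show ?thesis .
qed

section \<open>The stochastic accelerated x-update\<close>

lemma xsub_obj_expand:
  assumes "symmetric_mat H" and "symmetric_mat M"
  shows "xsub_obj H M \<gamma> c a b (u + s *\<^sub>R v) = xsub_obj H M \<gamma> c a b u
     + s * (c \<bullet> v + \<gamma> * ((u - a) \<bullet> (H *v v)) + (u - b) \<bullet> (M *v v))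
     + s\<^sup>2 / 2 * (\<gamma> * qn H v + qn M v)"
proof -
  have e: "qn G (u + s *\<^sub>R v - p) = qn G (u - p) + 2 * s * ((u - p) \<bullet> (G *v v)) + s\<^sup>2 * qn G v"
    if "symmetric_mat G" for G p
    using qn_add[OF that, of "u - p" "s *\<^sub>R v"] qn_scaleR[of G s v]
    by (simp add: matrix_vector_mult_scaleR algebra_simps)
  show ?thesis
    unfolding xsub_obj_def e[OF assms(1)] e[OF assms(2)] by (simp add: algebra_simps inner_add_right)
qed

lemma nonneg_if_perturbations_nonneg:
  fixes a r :: real
  assumes "\<And>s. 0 < s \<Longrightarrow> s \<le> 1 \<Longrightarrow> 0 \<le> a + s * r"
  shows "0 \<le> a"
proof (rule ccontr)
  assume "\<not> 0 \<le> a"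
  define s where "s = min 1 (- a / (2 * (\<bar>r\<bar> + 1)))"
  have s: "0 < s" "s \<le> 1" using \<open>\<not> 0 \<le> a\<close> by (auto simp: s_def divide_neg_pos)
  have "s \<le> - a / (2 * (\<bar>r\<bar> + 1))" by (simp add: s_def)
  from mult_right_mono[OF this, of "2 * (\<bar>r\<bar> + 1)"]
  have "s * (2 * (\<bar>r\<bar> + 1)) \<le> - a" by simp
  hence "2 * s + 2 * (s * \<bar>r\<bar>) \<le> - a" by (simp add: algebra_simps)
  moreover have "s * r \<le> s * \<bar>r\<bar>" "0 \<le> s * \<bar>r\<bar>" using s by (auto intro: mult_left_mono)
  ultimately show False using assms[OF s] s by linarith
qed

text \<open>The objective is quadratic along segments and its slope at the minimiser towards
  any feasible point is nonnegative.\<close>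
lemma xsub_obj_three_point:
  assumes cX: "convex X" and sH: "symmetric_mat H" and sM: "symmetric_mat M"
    and pH: "psd H" and pM: "psd M" and \<gamma>: "\<gamma> \<ge> 0" and q: "q \<in> X" and u: "u \<in> X"
    and min: "\<forall>u\<in>X. xsub_obj H M \<gamma> c a b q \<le> xsub_obj H M \<gamma> c a b u"
  shows "xsub_obj H M \<gamma> c a b q + \<gamma> / 2 * qn H (u - q) + 1/2 * qn M (u - q)
    \<le> xsub_obj H M \<gamma> c a b u"
proof -
  define v where "v = u - q"
  define L where "L = c \<bullet> v + \<gamma> * ((q - a) \<bullet> (H *v v)) + (q - b) \<bullet> (M *v v)"
  define R where "R = \<gamma> * qn H v + qn M v"
  have E: "xsub_obj H M \<gamma> c a b (q + s *\<^sub>R v) = xsub_obj H M \<gamma> c a b q + s * L + s\<^sup>2 / 2 * R"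
    for s
    using xsub_obj_expand[OF sH sM] unfolding L_def R_def by simp
  have "0 \<le> L + s * (R / 2)" if s: "0 < s" "s \<le> 1" for s
  proof -
    have "q + s *\<^sub>R v = (1 - s) *\<^sub>R q + s *\<^sub>R u" by (simp add: v_def algebra_simps)
    hence "q + s *\<^sub>R v \<in> X" using cX q u s by (simp add: convex_def)
    hence "0 \<le> s * (L + s * (R / 2))"
      using min E[of s] by (force simp: power2_eq_square algebra_simps)
    thus ?thesis using s by (simp add: zero_le_mult_iff)
  qed
  hence "0 \<le> L" by (rule nonneg_if_perturbations_nonneg)
  moreover have "xsub_obj H M \<gamma> c a b u = xsub_obj H M \<gamma> c a b q + L + R / 2"
    using E[of 1] by (simp add: v_def)
  ultimately show ?thesis unfolding R_def v_def by (simp add: add_divide_distrib)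
qed

text \<open>Quadratic part of the potential \<open>f u + xsub_quad h M x0 x u\<close> that the inner loop
  decreases.  The reference point \<open>x\<close> enters through \<open>\<parallel>x - u\<parallel>\<^sub>M\<^sup>2/2\<close>, which absorbs the
  \<open>M\<close>-term of the three-point property and vanishes at \<open>u = x\<close>.\<close>
definition xsub_quad :: "real^'n \<Rightarrow> real^'n^'n \<Rightarrow> real^'n \<Rightarrow> real^'n \<Rightarrow> real^'n \<Rightarrow> real" where
  "xsub_quad h M x0 x u = h \<bullet> u + 1/2 * qn M (u - x0) + 1/2 * qn M (x - u)"

lemma xsub_quad_convex:
  assumes "symmetric_mat M" and "psd M" and b: "0 \<le> b" "b \<le> 1"
  shows "xsub_quad h M x0 x (b *\<^sub>R q + (1 - b) *\<^sub>R p)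
    \<le> b * xsub_quad h M x0 x q + (1 - b) * xsub_quad h M x0 x p"
proof -
  have "b *\<^sub>R q + (1 - b) *\<^sub>R p - x0 = b *\<^sub>R (q - x0) + (1 - b) *\<^sub>R (p - x0)"
    "x - (b *\<^sub>R q + (1 - b) *\<^sub>R p) = b *\<^sub>R (x - q) + (1 - b) *\<^sub>R (x - p)"
    by (simp_all add: algebra_simps)
  hence q1: "qn M (b *\<^sub>R q + (1 - b) *\<^sub>R p - x0) \<le> b * qn M (q - x0) + (1 - b) * qn M (p - x0)"
    and q2: "qn M (x - (b *\<^sub>R q + (1 - b) *\<^sub>R p)) \<le> b * qn M (x - q) + (1 - b) * qn M (x - p)"
    using qn_convex[OF assms] by simp_all
  have lin: "h \<bullet> (b *\<^sub>R q + (1 - b) *\<^sub>R p) = b * (h \<bullet> q) + (1 - b) * (h \<bullet> p)"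
    by (simp add: inner_add_right)
  have "xsub_quad h M x0 x (b *\<^sub>R q + (1 - b) *\<^sub>R p)
      \<le> b * (h \<bullet> q) + (1 - b) * (h \<bullet> p) + 1/2 * (b * qn M (q - x0) + (1 - b) * qn M (p - x0))
        + 1/2 * (b * qn M (x - q) + (1 - b) * qn M (x - p))"
    unfolding xsub_quad_def lin using q1 q2 by (intro add_mono mult_left_mono order_refl) auto
  also have "\<dots> = b * xsub_quad h M x0 x q + (1 - b) * xsub_quad h M x0 x p"
    unfolding xsub_quad_def by (simp add: field_simps)
  finally show ?thesis .
qed

lemma betaT_bounds: "1 \<le> t \<Longrightarrow> 0 \<le> betaT t \<and> betaT t \<le> 1"
  by (simp add: betaT_def)

lemma step_size_gap:
  assumes "1 \<le> t" and "0 < \<eta>" and "0 < \<nu>"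
  shows "(1 - \<eta> * \<nu>) / (real t * \<eta>) \<le> gammaT \<eta> t / 2 - \<nu> * betaT t / 2"
proof -
  have "\<nu> / (real t + 1) \<le> \<nu> / real t" using assms by (intro divide_left_mono) auto
  moreover have "(1 - \<eta> * \<nu>) / (real t * \<eta>) = 1 / (real t * \<eta>) - \<nu> / real t"
    using assms by (simp add: field_simps)
  moreover have "gammaT \<eta> t / 2 = 1 / (real t * \<eta>)" "\<nu> * betaT t / 2 = \<nu> / (real t + 1)"
    using assms by (simp_all add: gammaT_def betaT_def field_simps add_pos_nonneg)
  ultimately show ?thesis by linarith
qed

text \<open>One step of the inner loop: the descent lemma at the extrapolated point
  \<open>x\<^sub>h = b a + (1-b) p\<close>, convexity of \<open>f\<close> at \<open>x\<^sub>h\<close>, the three-point property of the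
  prox step \<open>a \<mapsto> q\<close> and Young's inequality for the gradient error \<open>\<delta>\<close>.\<close>
lemma xsub_step_descent:
  fixes f :: "real^'n \<Rightarrow> real" and G :: "real^'n \<Rightarrow> real^'n"
  assumes cX: "convex X"
    and conv: "\<forall>u\<in>X. \<forall>v\<in>X. f u + G u \<bullet> (v - u) \<le> f v"
    and desc: "\<forall>u\<in>X. \<forall>v\<in>X. f v \<le> f u + G u \<bullet> (v - u) + \<nu> / 2 * qn H (v - u)"
    and H: "posdef H" and sM: "symmetric_mat M" and pM: "psd M"
    and b: "0 \<le> b" "b \<le> 1" and \<gamma>: "0 \<le> \<gamma>" and c: "0 < c" "c \<le> \<gamma> / 2 - \<nu> * b / 2"
    and p: "p \<in> X" and a: "a \<in> X" and q: "q \<in> X" and x: "x \<in> X"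
    and opt: "\<forall>u\<in>X. xsub_obj H M \<gamma> (d + h) a x0 q \<le> xsub_obj H M \<gamma> (d + h) a x0 u"
  defines "xh \<equiv> b *\<^sub>R a + (1 - b) *\<^sub>R p" and "\<phi> \<equiv> xsub_quad h M x0 x"
  shows "f (b *\<^sub>R q + (1 - b) *\<^sub>R p) + \<phi> (b *\<^sub>R q + (1 - b) *\<^sub>R p)
    \<le> (1 - b) * (f p + \<phi> p)
       + b * (f x + \<phi> x + \<gamma> / 2 * (qn H (x - a) - qn H (x - q))
              + (G xh - d) \<bullet> (a - x) + qn (matrix_inv H) (G xh - d) / (4 * c))"
proof -
  define x' where "x' = b *\<^sub>R q + (1 - b) *\<^sub>R p"
  define \<delta> where "\<delta> = G xh - d"
  define \<Delta> where "\<Delta> = q - a"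
  have sH: "symmetric_mat H" and pH: "psd H"
    using H by (simp_all add: posdef_imp_symmetric posdef_imp_psd)
  have xh: "xh \<in> X" unfolding xh_def using cX a p b by (simp add: convex_def)
  have x'X: "x' \<in> X" unfolding x'_def using cX q p b by (simp add: convex_def)
  have "x' - xh = b *\<^sub>R \<Delta>" and x'_xh: "x' - xh = (1 - b) *\<^sub>R (p - xh) + b *\<^sub>R (q - xh)"
    unfolding x'_def xh_def \<Delta>_def by (simp_all add: algebra_simps)
  hence "qn H (x' - xh) = b\<^sup>2 * qn H \<Delta>" by (simp add: qn_scaleR)
  moreover have "G xh \<bullet> (x' - xh) = (1 - b) * (G xh \<bullet> (p - xh)) + b * (G xh \<bullet> (q - xh))"
    unfolding x'_xh by (simp add: inner_add_right)
  moreover have "f x' \<le> f xh + G xh \<bullet> (x' - xh) + \<nu> / 2 * qn H (x' - xh)"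
    using desc xh x'X by blast
  ultimately have descent: "f x' \<le> f xh + (1 - b) * (G xh \<bullet> (p - xh)) + b * (G xh \<bullet> (q - xh))
      + \<nu> / 2 * b\<^sup>2 * qn H \<Delta>"
    by simp
  have conv_p: "(1 - b) * (f xh + G xh \<bullet> (p - xh)) \<le> (1 - b) * f p"
    using conv xh p b by (intro mult_left_mono) auto
  have conv_x: "f xh + G xh \<bullet> (x - xh) \<le> f x" using conv xh x by blast
  have split_q: "G xh \<bullet> (q - xh) = G xh \<bullet> (x - xh) + d \<bullet> (q - x) + \<delta> \<bullet> (a - x) + \<delta> \<bullet> \<Delta>"
    unfolding \<delta>_def \<Delta>_def by (simp add: algebra_simps inner_diff_left inner_diff_right)
  have quad: "\<phi> x' \<le> (1 - b) * \<phi> p + b * \<phi> q"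
    using xsub_quad_convex[OF sM pM b] unfolding x'_def \<phi>_def by (simp add: algebra_simps)
  have "xsub_obj H M \<gamma> (d + h) a x0 q + \<gamma> / 2 * qn H (x - q) + 1/2 * qn M (x - q)
      \<le> xsub_obj H M \<gamma> (d + h) a x0 x"
    using xsub_obj_three_point[OF cX sH sM pH pM \<gamma> q x opt] .
  hence prox: "d \<bullet> (q - x) + \<phi> q \<le> \<phi> x + \<gamma> / 2 * (qn H (x - a) - qn H (x - q) - qn H \<Delta>)"
    unfolding xsub_obj_def \<phi>_def xsub_quad_def \<Delta>_def
    by (simp add: algebra_simps inner_diff_right qn_def)
  have "\<delta> \<bullet> \<Delta> - c * qn H \<Delta> \<le> qn (matrix_inv H) \<delta> / (4 * c)"
    by (rule inner_le_qn_young[OF H c(1)])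
  hence young: "\<delta> \<bullet> \<Delta> - (\<gamma> / 2 - \<nu> * b / 2) * qn H \<Delta> \<le> qn (matrix_inv H) \<delta> / (4 * c)"
    using mult_right_mono[OF c(2) psd_qn_nonneg[OF pH, of \<Delta>]] by linarith
  define K where "K = f x + \<phi> x + \<gamma> / 2 * (qn H (x - a) - qn H (x - q)) + \<delta> \<bullet> (a - x)
    + qn (matrix_inv H) \<delta> / (4 * c)"
  have "f xh + G xh \<bullet> (q - xh) + \<phi> q + \<nu> / 2 * b * qn H \<Delta> \<le> K"
    using conv_x split_q prox young unfolding K_def by (simp add: algebra_simps)
  hence "b * (f xh + G xh \<bullet> (q - xh) + \<phi> q + \<nu> / 2 * b * qn H \<Delta>) \<le> b * K"
    using b by (intro mult_left_mono) auto
  hence "f x' + \<phi> x' \<le> (1 - b) * (f p + \<phi> p) + b * K"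
    using descent conv_p quad by (simp add: algebra_simps power2_eq_square)
  thus ?thesis unfolding K_def x'_def \<delta>_def .
qed

text \<open>The step inequality with the weights of the method: \<open>\<beta>\<^sub>t = 2/(t+1)\<close> turns the convex
  combination into a telescoping difference of \<open>t(t+1)/2\<close>-weighted potential gaps.\<close>
lemma xsub_step_bound:
  fixes f :: "real^'n \<Rightarrow> real" and G :: "real^'n \<Rightarrow> real^'n"
  assumes cX: "convex X"
    and conv: "\<forall>u\<in>X. \<forall>v\<in>X. f u + G u \<bullet> (v - u) \<le> f v"
    and desc: "\<forall>u\<in>X. \<forall>v\<in>X. f v \<le> f u + G u \<bullet> (v - u) + \<nu> / 2 * qn H (v - u)"
    and H: "posdef H" and sM: "symmetric_mat M" and pM: "psd M" and \<nu>: "\<nu> > 0"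
    and \<eta>: "0 < \<eta>" "\<eta> < 1 / \<nu>" and t: "1 \<le> t"
    and p: "p \<in> X" and a: "a \<in> X" and q: "q \<in> X" and x: "x \<in> X"
    and opt: "\<forall>u\<in>X. xsub_obj H M (gammaT \<eta> t) (d + h) a x0 q
                  \<le> xsub_obj H M (gammaT \<eta> t) (d + h) a x0 u"
  defines "\<Psi> \<equiv> \<lambda>u. f u + xsub_quad h M x0 x u"
    and "\<delta> \<equiv> G (betaT t *\<^sub>R a + (1 - betaT t) *\<^sub>R p) - d"
  shows "real t * (real t + 1) / 2 * (\<Psi> (betaT t *\<^sub>R q + (1 - betaT t) *\<^sub>R p) - \<Psi> x)
    \<le> (real t - 1) * real t / 2 * (\<Psi> p - \<Psi> x)
       + (1 / \<eta>) * (qn H (x - a) - qn H (x - q))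
       + real t * (\<delta> \<bullet> (a - x))
       + \<eta> / (4 * (1 - \<eta> * \<nu>)) * ((real t)\<^sup>2 * qn (matrix_inv H) \<delta>)"
proof -
  define T where "T = real t"
  define b where "b = betaT t"
  define c where "c = (1 - \<eta> * \<nu>) / (T * \<eta>)"
  define R where "R = \<Psi> x + gammaT \<eta> t / 2 * (qn H (x - a) - qn H (x - q)) + \<delta> \<bullet> (a - x)
    + qn (matrix_inv H) \<delta> / (4 * c)"
  have T: "1 \<le> T" using t by (simp add: T_def)
  have \<eta>\<nu>: "\<eta> * \<nu> < 1" using \<eta> \<nu> by (simp add: field_simps)
  have b: "b = 2 / (T + 1)" by (simp add: b_def betaT_def T_def)
  define W where "W = T * (T + 1) / 2"
  have weights: "W * (1 - b) = (T - 1) * T / 2" "W * b = T"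
    unfolding b W_def using T by (simp_all add: field_simps)
  have "\<Psi> (b *\<^sub>R q + (1 - b) *\<^sub>R p) \<le> (1 - b) * \<Psi> p + b * R"
    using xsub_step_descent[OF cX conv desc H sM pM _ _ _ _ _ p a q x opt, of b c]
      betaT_bounds[OF t] step_size_gap[OF t \<eta>(1) \<nu>] \<eta>\<nu> \<eta> T
    unfolding \<Psi>_def R_def \<delta>_def b_def c_def T_def by (simp add: gammaT_def)
  hence "W * (\<Psi> (b *\<^sub>R q + (1 - b) *\<^sub>R p) - \<Psi> x)
      \<le> W * ((1 - b) * (\<Psi> p - \<Psi> x) + b * (R - \<Psi> x))"
    using T unfolding W_def by (intro mult_left_mono) (auto simp: algebra_simps)
  also have "\<dots> = (T - 1) * T / 2 * (\<Psi> p - \<Psi> x) + T * (R - \<Psi> x)"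
    by (simp only: distrib_left mult.assoc[symmetric] weights)
  also have "T * (R - \<Psi> x) = (1 / \<eta>) * (qn H (x - a) - qn H (x - q)) + T * (\<delta> \<bullet> (a - x))
      + \<eta> / (4 * (1 - \<eta> * \<nu>)) * (T\<^sup>2 * qn (matrix_inv H) \<delta>)"
  proof -
    have "T * (R - \<Psi> x) = (T * (gammaT \<eta> t / 2)) * (qn H (x - a) - qn H (x - q))
        + T * (\<delta> \<bullet> (a - x)) + (T / (4 * c)) * qn (matrix_inv H) \<delta>"
      unfolding R_def by (simp add: algebra_simps)
    moreover have "T * (gammaT \<eta> t / 2) = 1 / \<eta>" using T by (simp add: gammaT_def T_def)
    moreover have "T / (4 * c) = \<eta> / (4 * (1 - \<eta> * \<nu>)) * T\<^sup>2"
      using T \<eta> \<eta>\<nu> by (simp add: c_def power2_eq_square)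
    ultimately show ?thesis by (simp only: mult.assoc)
  qed
  finally show ?thesis unfolding W_def T_def b_def by linarith
qed

lemma weighted_telescoping:
  fixes g s :: "nat \<Rightarrow> real"
  assumes step: "\<And>t. t \<in> {1..m} \<Longrightarrow>
    real t * (real t + 1) / 2 * g (Suc t) \<le> (real t - 1) * real t / 2 * g t + s t"
  shows "real m * (real m + 1) / 2 * g (Suc m) \<le> (\<Sum>t = 1..m. s t)"
  using step
proof (induction m)
  case (Suc m)
  have "real m * (real m + 1) / 2 * g (Suc m) \<le> (\<Sum>t = 1..m. s t)"
    using Suc by simp
  moreover have "real (Suc m) * (real (Suc m) + 1) / 2 * g (Suc (Suc m))
      \<le> real m * (real m + 1) / 2 * g (Suc m) + s (Suc m)"
    using Suc.prems[of "Suc m"] by (simp add: algebra_simps)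
  ultimately show ?case by simp
qed simp

lemma inner_iterates_in_set:
  assumes cX: "convex X" and init: "xs 1 \<in> X" "xbs 1 \<in> X"
    and step: "\<forall>t\<in>{1..m}. xbs (Suc t) \<in> X
                  \<and> xs (Suc t) = betaT t *\<^sub>R xbs (Suc t) + (1 - betaT t) *\<^sub>R xs t"
  shows "\<forall>t\<in>{1..m+1}. xs t \<in> X \<and> xbs t \<in> X"
proof -
  have "xs (Suc t) \<in> X \<and> xbs (Suc t) \<in> X" if "t \<le> m" for t
    using that
  proof (induction t)
    case (Suc t)
    hence "xs (Suc t) \<in> X" "xbs (Suc (Suc t)) \<in> X"
      "xs (Suc (Suc t)) = betaT (Suc t) *\<^sub>R xbs (Suc (Suc t)) + (1 - betaT (Suc t)) *\<^sub>R xs (Suc t)"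
      using step by auto
    thus ?case
      using cX betaT_bounds[of "Suc t"] by (simp add: convex_def)
  qed (use init in simp)
  moreover have "t = Suc (t - 1) \<and> t - 1 \<le> m" if "t \<in> {1..m+1}" for t
    using that by auto
  ultimately show ?thesis by metis
qed

lemma nested_iterates_in_set:
  assumes cX: "convex X" and x0: "x 0 \<in> X" "xb 0 = x 0"
    and inner_init: "\<forall>i. xin i 1 = x i \<and> xbin i 1 = xb i"
    and inner_step: "\<forall>i. \<forall>t\<in>{1..m i}. xbin i (Suc t) \<in> X
        \<and> xin i (Suc t) = betaT t *\<^sub>R xbin i (Suc t) + (1 - betaT t) *\<^sub>R xin i t"
    and outer: "\<forall>i. x (Suc i) = xin i (m i + 1) \<and> xb (Suc i) = xbin i (m i + 1)"
  shows "\<forall>t\<in>{1..m k + 1}. xin k t \<in> X \<and> xbin k t \<in> X"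
proof -
  have inner: "\<forall>t\<in>{1..m i + 1}. xin i t \<in> X \<and> xbin i t \<in> X"
    if "x i \<in> X" "xb i \<in> X" for i
    using inner_iterates_in_set[OF cX, of "xin i" "xbin i" "m i"] that inner_init inner_step by auto
  have "x i \<in> X \<and> xb i \<in> X" for i
    by (induction i) (use x0 inner outer in auto)
  thus ?thesis using inner by blast
qed

text \<open>Summing the weighted step inequalities, the potential \<open>f + xsub_quad (-c) M x0 x\<close> drops
  from \<open>x\<close> to the output by at least \<open>\<zeta>(x)\<close>.\<close>
lemma xsub_output_bound:
  fixes f :: "real^'n \<Rightarrow> real" and G :: "real^'n \<Rightarrow> real^'n"
  assumes cX: "convex X"
    and conv: "\<forall>u\<in>X. \<forall>v\<in>X. f u + G u \<bullet> (v - u) \<le> f v"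
    and desc: "\<forall>u\<in>X. \<forall>v\<in>X. f v \<le> f u + G u \<bullet> (v - u) + \<nu> / 2 * qn H (v - u)"
    and H: "posdef H" and sM: "symmetric_mat M" and pM: "psd M" and \<nu>: "\<nu> > 0"
    and \<eta>: "0 < \<eta>" "\<eta> < 1 / \<nu>" and m: "1 \<le> m" and x: "x \<in> X"
    and x0: "xs 1 = x0"
    and mem: "\<forall>t\<in>{1..m+1}. xs t \<in> X \<and> xbs t \<in> X"
    and step: "\<forall>t\<in>{1..m}. (\<forall>u\<in>X. xsub_obj H M (gammaT \<eta> t) (d t - c) (xbs t) x0 (xbs (Suc t))
                 \<le> xsub_obj H M (gammaT \<eta> t) (d t - c) (xbs t) x0 u)
              \<and> xs (Suc t) = betaT t *\<^sub>R xbs (Suc t) + (1 - betaT t) *\<^sub>R xs t"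
  shows "f x - f (xs (m+1)) + (x - xs (m+1)) \<bullet> (M *v (xs (m+1) - x0) - c)
     \<ge> zeta H \<nu> \<eta> m (xbs 1) (xbs (m+1)) (\<lambda>t. G (xhat xs xbs t) - d t) xbs x"
proof -
  define \<Psi> where "\<Psi> u = f u + xsub_quad (- c) M x0 x u" for u
  define \<delta> where "\<delta> t = G (xhat xs xbs t) - d t" for t
  define s where "s t = (1 / \<eta>) * (qn H (x - xbs t) - qn H (x - xbs (Suc t)))
       + real t * (\<delta> t \<bullet> (xbs t - x))
       + \<eta> / (4 * (1 - \<eta> * \<nu>)) * ((real t)\<^sup>2 * qn (matrix_inv H) (\<delta> t))" for t
  have "real m * (real m + 1) / 2 * (\<Psi> (xs (Suc m)) - \<Psi> x) \<le> (\<Sum>t = 1..m. s t)"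
  proof (rule weighted_telescoping)
    fix t assume t: "t \<in> {1..m}"
    hence t1: "1 \<le> t" and X_t: "xs t \<in> X" "xbs t \<in> X" "xbs (Suc t) \<in> X" using mem by auto
    have opt: "\<forall>u\<in>X. xsub_obj H M (gammaT \<eta> t) (d t + - c) (xbs t) x0 (xbs (Suc t))
        \<le> xsub_obj H M (gammaT \<eta> t) (d t + - c) (xbs t) x0 u"
      and xs: "xs (Suc t) = betaT t *\<^sub>R xbs (Suc t) + (1 - betaT t) *\<^sub>R xs t"
      using step t by simp_all
    show "real t * (real t + 1) / 2 * (\<Psi> (xs (Suc t)) - \<Psi> x)
        \<le> (real t - 1) * real t / 2 * (\<Psi> (xs t) - \<Psi> x) + s t"
      using xsub_step_bound[OF cX conv desc H sM pM \<nu> \<eta> t1 X_t x opt]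
      unfolding \<Psi>_def s_def \<delta>_def xhat_def xs by simp
  qed
  also have "(\<Sum>t = 1..m. s t) = - (real m * (real m + 1) / 2)
      * zeta H \<nu> \<eta> m (xbs 1) (xbs (m+1)) \<delta> xbs x"
  proof -
    define E where "E = (1 / \<eta>) * (qn H (x - xbs (m+1)) - qn H (x - xbs 1))
        - (\<Sum>t=1..m. real t * (\<delta> t \<bullet> (xbs t - x)))
        - \<eta> / (4 * (1 - \<eta> * \<nu>)) * (\<Sum>t=1..m. (real t)\<^sup>2 * qn (matrix_inv H) (\<delta> t))"
    have telescope: "(\<Sum>t = 1..m. qn H (x - xbs t) - qn H (x - xbs (Suc t)))
        = qn H (x - xbs 1) - qn H (x - xbs (m+1))"
      using sum_Suc_diff[of 1 m "\<lambda>t. - qn H (x - xbs t)"] m by simp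
    have "(\<Sum>t = 1..m. s t) = (1 / \<eta>) * (\<Sum>t = 1..m. qn H (x - xbs t) - qn H (x - xbs (Suc t)))
        + (\<Sum>t=1..m. real t * (\<delta> t \<bullet> (xbs t - x)))
        + \<eta> / (4 * (1 - \<eta> * \<nu>)) * (\<Sum>t=1..m. (real t)\<^sup>2 * qn (matrix_inv H) (\<delta> t))"
      unfolding s_def by (simp add: sum.distrib sum_distrib_left)
    also have "\<dots> = - E" unfolding telescope E_def by (simp add: algebra_simps)
    finally have "(\<Sum>t = 1..m. s t) = - E" .
    moreover have "zeta H \<nu> \<eta> m (xbs 1) (xbs (m+1)) \<delta> xbs x = 2 / (real m * (real m + 1)) * E"
      unfolding zeta_def E_def by simp
    ultimately show ?thesis using m by simp
  qed
  finally have "real m * (real m + 1) / 2 * (\<Psi> (xs (Suc m)) - \<Psi> x)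
      \<le> real m * (real m + 1) / 2 * - zeta H \<nu> \<eta> m (xbs 1) (xbs (m+1)) \<delta> xbs x"
    by simp
  hence "\<Psi> (xs (Suc m)) - \<Psi> x \<le> - zeta H \<nu> \<eta> m (xbs 1) (xbs (m+1)) \<delta> xbs x"
    using m by (subst (asm) mult_le_cancel_left_pos) auto
  hence "\<Psi> x - \<Psi> (xs (m+1)) \<ge> zeta H \<nu> \<eta> m (xbs 1) (xbs (m+1)) \<delta> xbs x"
    by simp
  moreover have "\<Psi> x - \<Psi> x1 = f x - f x1 + (x - x1) \<bullet> (M *v (x1 - x0) - c)" for x1
  proof -
    have "qn M (x - x0) = qn M (x - x1) + 2 * ((x - x1) \<bullet> (M *v (x1 - x0))) + qn M (x1 - x0)"
      using qn_add[OF sM, of "x - x1" "x1 - x0"] by simp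
    moreover have "(x - x1) \<bullet> (M *v (x1 - x0) - c) = - c \<bullet> x - - c \<bullet> x1 + (x - x1) \<bullet> (M *v (x1 - x0))"
      by (simp add: inner_diff_left inner_diff_right inner_commute)
    moreover have "qn M (x - x) = 0" by (simp add: qn_def)
    ultimately show ?thesis unfolding \<Psi>_def xsub_quad_def by linarith
  qed
  ultimately show ?thesis unfolding \<delta>_def by simp
qed

section \<open>Optimality of the proximal y- and z-updates\<close>

lemma proper_closed_convex_finite_at_minimiser:
  assumes pcc: "proper_closed_convex Y g" and yt: "yt \<in> Y"
    and min: "\<forall>u\<in>Y. g yt + ereal (q yt) \<le> g u + ereal (q u)"
  shows "\<exists>a. g yt = ereal a"
proof -
  obtain u0 where u0: "u0 \<in> Y" "g u0 \<noteq> \<infinity>" "g u0 \<noteq> - \<infinity>"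
    using pcc unfolding proper_closed_convex_def by blast
  have "g yt \<noteq> \<infinity>"
  proof
    assume "g yt = \<infinity>"
    hence "g u0 + ereal (q u0) = \<infinity>" using min u0 by (metis ereal_infty_less_eq(1) plus_ereal.simps(2))
    thus False using u0 by (cases "g u0") auto
  qed
  moreover have "g yt \<noteq> - \<infinity>" using pcc yt unfolding proper_closed_convex_def by blast
  ultimately show ?thesis by (cases "g yt") auto
qed

lemma proper_closed_convex_first_order:
  assumes cY: "convex Y" and pcc: "proper_closed_convex Y g" and yt: "yt \<in> Y" and u: "u \<in> Y"
    and gyt: "g yt = ereal a"
    and min: "\<forall>v\<in>Y. g yt + ereal (q yt) \<le> g v + ereal (q v)"
    and expand: "\<And>s. q (yt + s *\<^sub>R (u - yt)) = q yt + s * D + s\<^sup>2 * R"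
  shows "ereal (a - D) \<le> g u"
proof (cases "g u")
  case (real gu)
  have "0 \<le> (gu - a + D) + s * R" if s: "0 < s" "s \<le> 1" for s
  proof -
    have e: "yt + s *\<^sub>R (u - yt) = s *\<^sub>R u + (1 - s) *\<^sub>R yt" by (simp add: algebra_simps)
    have "g (yt + s *\<^sub>R (u - yt)) \<le> ereal s * g u + ereal (1 - s) * g yt"
      unfolding e using pcc u yt s unfolding proper_closed_convex_def by auto
    hence "g (yt + s *\<^sub>R (u - yt)) + ereal (q (yt + s *\<^sub>R (u - yt)))
        \<le> ereal (s * gu + (1 - s) * a) + ereal (q (yt + s *\<^sub>R (u - yt)))"
      using real gyt by (intro add_right_mono) simp
    moreover have "yt + s *\<^sub>R (u - yt) \<in> Y" unfolding e using cY u yt s by (simp add: convex_def)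
    ultimately have "a + q yt \<le> s * gu + (1 - s) * a + q (yt + s *\<^sub>R (u - yt))"
      using min gyt by (metis order_trans plus_ereal.simps(1) ereal_less_eq(3))
    hence "0 \<le> s * ((gu - a + D) + s * R)"
      unfolding expand by (simp add: algebra_simps power2_eq_square)
    thus ?thesis using s by (simp add: zero_le_mult_iff)
  qed
  hence "0 \<le> gu - a + D" by (rule nonneg_if_perturbations_nonneg)
  thus ?thesis using real by simp
next
  case MInf
  thus ?thesis using pcc u unfolding proper_closed_convex_def by blast
qed simp

lemma prox_linearized_optimality:
  fixes g :: "real^'n \<Rightarrow> ereal" and B :: "real^'n^'m" and L :: "real^'n^'n"
  assumes cY: "convex Y" and pcc: "proper_closed_convex Y g" and sL: "symmetric_mat L"
    and yt: "yt \<in> Y"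
    and min: "\<forall>u\<in>Y. g yt + ereal (\<beta> / 2 * (norm (B *v yt + r))\<^sup>2 + 1/2 * qn L (yt - y0))
                 \<le> g u + ereal (\<beta> / 2 * (norm (B *v u + r))\<^sup>2 + 1/2 * qn L (u - y0))"
  shows "\<exists>a. g yt = ereal a \<and>
    (\<forall>u\<in>Y. ereal (a - (u - yt) \<bullet> (\<beta> *\<^sub>R (transpose B *v (B *v yt + r)) + L *v (yt - y0))) \<le> g u)"
proof -
  define q where "q v = \<beta> / 2 * (norm (B *v v + r))\<^sup>2 + 1/2 * qn L (v - y0)" for v
  define Dq where "Dq = \<beta> *\<^sub>R (transpose B *v (B *v yt + r)) + L *v (yt - y0)"
  have min': "\<forall>u\<in>Y. g yt + ereal (q yt) \<le> g u + ereal (q u)" using min unfolding q_def by simp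
  obtain a where a: "g yt = ereal a"
    using proper_closed_convex_finite_at_minimiser[OF pcc yt min'] by blast
  have "q (yt + s *\<^sub>R (u - yt)) = q yt + s * ((u - yt) \<bullet> Dq)
      + s\<^sup>2 * (\<beta> / 2 * (norm (B *v (u - yt)))\<^sup>2 + 1/2 * qn L (u - yt))" for s u
  proof -
    define v where "v = B *v (u - yt)"
    have 1: "B *v (yt + s *\<^sub>R (u - yt)) + r = (B *v yt + r) + s *\<^sub>R v"
      unfolding v_def by (simp add: matrix_vector_right_distrib matrix_vector_mult_scaleR algebra_simps)
    have 2: "yt + s *\<^sub>R (u - yt) - y0 = (yt - y0) + s *\<^sub>R (u - yt)"
      by (simp add: algebra_simps)
    have 3: "(norm ((B *v yt + r) + s *\<^sub>R v))\<^sup>2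
        = (norm (B *v yt + r))\<^sup>2 + 2 * s * ((u - yt) \<bullet> (transpose B *v (B *v yt + r))) + s\<^sup>2 * (norm v)\<^sup>2"
      unfolding v_def inner_transpose_mult
      by (simp only: power2_norm_eq_inner)
        (simp add: inner_add_left inner_add_right inner_commute power2_eq_square algebra_simps)
    have 4: "qn L ((yt - y0) + s *\<^sub>R (u - yt))
        = qn L (yt - y0) + 2 * s * ((u - yt) \<bullet> (L *v (yt - y0))) + s\<^sup>2 * qn L (u - yt)"
      unfolding qn_add[OF sL] qn_scaleR symmetric_mat_inner_commute[OF sL, of "yt - y0"]
      by (simp add: matrix_vector_mult_scaleR)
    show ?thesis
      unfolding q_def 1 2 3 4 unfolding Dq_def v_def by (simp add: inner_add_right field_simps)
  qed
  hence "\<forall>u\<in>Y. ereal (a - (u - yt) \<bullet> Dq) \<le> g u"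
    using proper_closed_convex_first_order[OF cY pcc yt _ a min'] by blast
  thus ?thesis using a unfolding Dq_def by blast
qed

section \<open>Assembling the variational inequality\<close>

text \<open>The linear part of \<open>\<J>\<close> is skew-symmetric.\<close>
lemma inner_Jop_diff:
  "(w - v) \<bullet> Jop A B C b w = (w - v) \<bullet> Jop A B C b v"
proof -
  obtain x y z lm x' y' z' lm' where wv: "w = (x, y, z, lm)" "v = (x', y', z', lm')"
    by (cases w, cases v) auto
  have "Jop A B C b w - Jop A B C b v = (- (transpose A *v (lm - lm')), - (transpose B *v (lm - lm')),
      - (transpose C *v (lm - lm')), A *v (x - x') + B *v (y - y') + C *v (z - z'))"
    unfolding wv Jop_def by (simp add: matrix_vector_mult_diff_distrib del: transpose_matrix_vector)
  hence "(w - v) \<bullet> (Jop A B C b w - Jop A B C b v) = 0"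
    unfolding wv by (simp add: inner_transpose_mult inner_add_right del: transpose_matrix_vector)
  thus ?thesis by (simp add: inner_diff_right)
qed

text \<open>Rewriting the three block optimality conditions in terms of
  \<open>\<tilde>\<lambda> = \<lambda> - \<beta>(Ax\<^sup>k\<^sup>+\<^sup>1 + By\<^sup>k + Cz\<^sup>k - b)\<close> produces exactly the rows of \<open>Q\<^sub>k\<close>.\<close>
lemma variational_inequality_of_block_optimality:
  fixes f :: "real^'n1 \<Rightarrow> real" and g :: "real^'n2 \<Rightarrow> ereal" and l :: "real^'n3 \<Rightarrow> ereal"
    and A :: "real^'n1^'m" and B :: "real^'n2^'m" and C :: "real^'n3^'m" and b lam :: "real^'m"
    and x1 xk :: "real^'n1" and y1 yk :: "real^'n2" and z1 zk :: "real^'n3" and \<beta> \<tau> :: real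
  defines "r \<equiv> A *v x1 + B *v yk + C *v zk - b"
  defines "lh \<equiv> lam - (\<tau> * \<beta>) *\<^sub>R r" and "lt \<equiv> lam - \<beta> *\<^sub>R r"
  assumes \<beta>: "\<beta> > 0"
    and x_opt: "\<forall>u\<in>X. f u - f x1 + (u - x1) \<bullet> (M *v (x1 - xk)
                  - transpose A *v (lam - \<beta> *\<^sub>R (A *v xk + B *v yk + C *v zk - b))) \<ge> \<zeta> u"
    and y_opt: "g y1 = ereal gy" "\<forall>u\<in>Y. ereal (gy - (u - y1) \<bullet> (\<beta> *\<^sub>R (transpose B *v (B *v y1
                  + (A *v x1 + C *v zk - b - (1 / \<beta>) *\<^sub>R lh))) + L1 *v (y1 - yk))) \<le> g u"
    and z_opt: "l z1 = ereal gz" "\<forall>u\<in>Z. ereal (gz - (u - z1) \<bullet> (\<beta> *\<^sub>R (transpose C *v (C *v z1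
                  + (A *v x1 + B *v yk - b - (1 / \<beta>) *\<^sub>R lh))) + L2 *v (z1 - zk))) \<le> l u"
  shows "\<forall>w \<in> X \<times> Y \<times> Z \<times> UNIV.
    Fobj f g l w - Fobj f g l (x1, y1, z1, lt) + ereal ((w - (x1, y1, z1, lt)) \<bullet> Jop A B C b w)
    \<ge> ereal ((w - (x1, y1, z1, lt))
          \<bullet> Qmul (M - \<beta> *\<^sub>R (transpose A ** A)) L1 L2 B C \<beta> \<tau> ((xk, yk, zk, lam) - (x1, y1, z1, lt))
        + \<zeta> (fst w))"
proof (intro ballI)
  fix w assume w: "w \<in> X \<times> Y \<times> Z \<times> (UNIV :: (real^'m) set)"
  obtain xw yw zw lw where w_def: "w = (xw, yw, zw, lw)" by (cases w) auto
  have xw: "xw \<in> X" and yw: "yw \<in> Y" and zw: "zw \<in> Z" using w w_def by auto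
  define D where "D = M - \<beta> *\<^sub>R (transpose A ** A)"
  define Ly where "Ly = (L1 + \<beta> *\<^sub>R (transpose B ** B)) *v (yk - y1) - \<tau> *\<^sub>R (transpose B *v (lam - lt))"
  define Lz where "Lz = (L2 + \<beta> *\<^sub>R (transpose C ** C)) *v (zk - z1) - \<tau> *\<^sub>R (transpose C *v (lam - lt))"
  have "M *v (x1 - xk) - transpose A *v (lam - \<beta> *\<^sub>R (A *v xk + B *v yk + C *v zk - b))
      = - (transpose A *v lt) - D *v (xk - x1)"
    unfolding lt_def r_def D_def
    by (simp add: algebra_simps matrix_vector_mul_assoc[symmetric]
        scaleR_matrix_vector_assoc[symmetric] del: transpose_matrix_vector)
  hence fx: "\<zeta> xw \<le> f xw - f x1 + (xw - x1) \<bullet> (- (transpose A *v lt) - D *v (xk - x1))"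
    using x_opt xw by metis
  have "\<beta> *\<^sub>R (transpose B *v (B *v y1 + (A *v x1 + C *v zk - b - (1 / \<beta>) *\<^sub>R lh))) + L1 *v (y1 - yk)
      = - (transpose B *v lt) - Ly"
    unfolding Ly_def lt_def lh_def r_def using \<beta>
    by (simp add: algebra_simps matrix_vector_mul_assoc[symmetric]
        scaleR_matrix_vector_assoc[symmetric] del: transpose_matrix_vector)
  hence gy: "ereal (gy - (yw - y1) \<bullet> (- (transpose B *v lt) - Ly)) \<le> g yw"
    using y_opt(2) yw by metis
  have "\<beta> *\<^sub>R (transpose C *v (C *v z1 + (A *v x1 + B *v yk - b - (1 / \<beta>) *\<^sub>R lh))) + L2 *v (z1 - zk)
      = - (transpose C *v lt) - Lz"
    unfolding Lz_def lt_def lh_def r_def using \<beta>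
    by (simp add: algebra_simps matrix_vector_mul_assoc[symmetric]
        scaleR_matrix_vector_assoc[symmetric] del: transpose_matrix_vector)
  hence gz: "ereal (gz - (zw - z1) \<bullet> (- (transpose C *v lt) - Lz)) \<le> l zw"
    using z_opt(2) zw by metis
  have "- (B *v (yk - y1)) - (C *v (zk - z1)) + (1 / \<beta>) *\<^sub>R (lam - lt) = A *v x1 + B *v y1 + C *v z1 - b"
    unfolding lt_def r_def using \<beta> by (simp add: algebra_simps)
  hence Q: "(w - (x1, y1, z1, lt)) \<bullet> Qmul D L1 L2 B C \<beta> \<tau> ((xk, yk, zk, lam) - (x1, y1, z1, lt))
      = (xw - x1) \<bullet> (D *v (xk - x1)) + (yw - y1) \<bullet> Ly + (zw - z1) \<bullet> Lz
        + (lw - lt) \<bullet> (A *v x1 + B *v y1 + C *v z1 - b)"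
    unfolding w_def Qmul_def Ly_def Lz_def by simp
  have J: "(w - (x1, y1, z1, lt)) \<bullet> Jop A B C b w
      = - ((xw - x1) \<bullet> (transpose A *v lt)) - (yw - y1) \<bullet> (transpose B *v lt)
        - (zw - z1) \<bullet> (transpose C *v lt) + (lw - lt) \<bullet> (A *v x1 + B *v y1 + C *v z1 - b)"
    unfolding inner_Jop_diff[of w] unfolding w_def Jop_def by simp
  define a where "a = gy - (yw - y1) \<bullet> (- (transpose B *v lt) - Ly)"
  define c where "c = gz - (zw - z1) \<bullet> (- (transpose C *v lt) - Lz)"
  have "ereal (f xw) + ereal a + ereal c \<le> Fobj f g l w"
    unfolding w_def Fobj_def prod.case using gy gz unfolding a_def[symmetric] c_def[symmetric]
    by (intro add_mono) auto
  hence "ereal (f xw + a + c) \<le> Fobj f g l w" by simp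
  hence "ereal (f xw + a + c) - ereal (f x1 + gy + gz) + ereal ((w - (x1, y1, z1, lt)) \<bullet> Jop A B C b w)
      \<le> Fobj f g l w - Fobj f g l (x1, y1, z1, lt) + ereal ((w - (x1, y1, z1, lt)) \<bullet> Jop A B C b w)"
    using y_opt(1) z_opt(1) by (intro add_right_mono ereal_minus_mono) (auto simp: Fobj_def)
  hence "ereal (f xw + a + c - (f x1 + gy + gz) + (w - (x1, y1, z1, lt)) \<bullet> Jop A B C b w)
      \<le> Fobj f g l w - Fobj f g l (x1, y1, z1, lt) + ereal ((w - (x1, y1, z1, lt)) \<bullet> Jop A B C b w)"
    by simp
  moreover have "(w - (x1, y1, z1, lt)) \<bullet> Qmul D L1 L2 B C \<beta> \<tau> ((xk, yk, zk, lam) - (x1, y1, z1, lt))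
      + \<zeta> xw \<le> f xw + a + c - (f x1 + gy + gz) + (w - (x1, y1, z1, lt)) \<bullet> Jop A B C b w"
    unfolding Q J a_def c_def using fx by (simp add: inner_diff_right)
  ultimately show "Fobj f g l w - Fobj f g l (x1, y1, z1, lt) + ereal ((w - (x1, y1, z1, lt)) \<bullet> Jop A B C b w)
    \<ge> ereal ((w - (x1, y1, z1, lt)) \<bullet> Qmul D L1 L2 B C \<beta> \<tau> ((xk, yk, zk, lam) - (x1, y1, z1, lt))
        + \<zeta> (fst w))"
    unfolding w_def fst_conv using ereal_less_eq(3) order_trans by blast
qed

theorem theorem4p5:
  fixes X :: "(real^'n1) set" and Y :: "(real^'n2) set" and Z :: "(real^'n3) set"
    and A :: "real^'n1^'m" and B :: "real^'n2^'m" and C :: "real^'n3^'m" and b :: "real^'m"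
    and g :: "real^'n2 \<Rightarrow> ereal" and l :: "real^'n3 \<Rightarrow> ereal"
    and N :: nat and fj :: "nat \<Rightarrow> real^'n1 \<Rightarrow> real" and gj :: "nat \<Rightarrow> real^'n1 \<Rightarrow> real^'n1"
    and U :: "(real^'n1) set"
    and H :: "real^'n1^'n1" and \<nu> :: real
    and \<beta> \<tau> s :: real and L1 :: "real^'n2^'n2" and L2 :: "real^'n3^'n3"
    and x xb :: "nat \<Rightarrow> real^'n1" and y :: "nat \<Rightarrow> real^'n2" and z :: "nat \<Rightarrow> real^'n3"
    and lam :: "nat \<Rightarrow> real^'m"
    and m :: "nat \<Rightarrow> nat" and \<eta> :: "nat \<Rightarrow> real" and M :: "nat \<Rightarrow> real^'n1^'n1"
    and xin xbin :: "nat \<Rightarrow> nat \<Rightarrow> real^'n1" and \<xi> :: "nat \<Rightarrow> nat \<Rightarrow> nat"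
    and e :: "nat \<Rightarrow> nat \<Rightarrow> real^'n1"
    and k :: nat
  assumes X: "X \<noteq> {}" "closed X" "convex X"
    and Y: "Y \<noteq> {}" "closed Y" "convex Y"
    and Z: "Z \<noteq> {}" "closed Z" "convex Z"
    and g: "proper_closed_convex Y g" and l: "proper_closed_convex Z l"
    and N: "N \<ge> 1"
    and U: "open U" "X \<subseteq> U"
    and fj_deriv: "\<forall>j\<in>{1..N}. \<forall>u\<in>U. (fj j has_derivative (\<lambda>h. gj j u \<bullet> h)) (at u)"
    and gj_cont: "\<forall>j\<in>{1..N}. continuous_on U (gj j)"
    and fj_convex: "\<forall>j\<in>{1..N}. convex_on X (fj j)"
    and H: "posdef H" and \<nu>: "\<nu> > 0"
    and Lip: "\<forall>j\<in>{1..N}. \<forall>x1\<in>X. \<forall>x2\<in>X.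
                gnorm (matrix_inv H) (gj j x1 - gj j x2) \<le> \<nu> * gnorm H (x1 - x2)"
    and \<beta>: "\<beta> > 0" and \<tau>s: "(\<tau>, s) \<in> Delta"
    and L: "symmetric_mat L1" "symmetric_mat L2"
    and init: "x 0 \<in> X" "y 0 \<in> Y" "z 0 \<in> Z" "xb 0 = x 0"
    and params: "\<forall>i. m i \<ge> 1 \<and> \<eta> i > 0 \<and> symmetric_mat (M i)
                    \<and> psd (M i - \<beta> *\<^sub>R (transpose A ** A))"
    and inner_init: "\<forall>i. xin i 1 = x i \<and> xbin i 1 = xb i"
    and inner_step: "\<forall>i. \<forall>t\<in>{1..m i}.
        \<xi> i t \<in> {1..N} \<and>
        xbin i (Suc t) \<in> X \<and>
        (\<forall>u\<in>X. xsub_obj H (M i) (gammaT (\<eta> i) t)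
                   (gj (\<xi> i t) (xhat (xin i) (xbin i) t) + e i t
                    - (transpose A *v (lam i - \<beta> *\<^sub>R (A *v x i + B *v y i + C *v z i - b))))
                   (xbin i t) (x i) (xbin i (Suc t))
                 \<le> xsub_obj H (M i) (gammaT (\<eta> i) t)
                   (gj (\<xi> i t) (xhat (xin i) (xbin i) t) + e i t
                    - (transpose A *v (lam i - \<beta> *\<^sub>R (A *v x i + B *v y i + C *v z i - b))))
                   (xbin i t) (x i) u) \<and>
        xin i (Suc t) = betaT t *\<^sub>R xbin i (Suc t) + (1 - betaT t) *\<^sub>R xin i t"
    and outer_x: "\<forall>i. x (Suc i) = xin i (m i + 1) \<and> xb (Suc i) = xbin i (m i + 1)"
    and outer_y: "\<forall>i. y (Suc i) \<in> Y \<and>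
        (\<forall>u\<in>Y. g (y (Suc i)) + ereal (\<beta> / 2 * (norm (A *v x (Suc i) + B *v y (Suc i) + C *v z i - b
                   - (1 / \<beta>) *\<^sub>R (lam i - (\<tau> * \<beta>) *\<^sub>R (A *v x (Suc i) + B *v y i + C *v z i - b))))^2
                   + 1/2 * qn L1 (y (Suc i) - y i))
              \<le> g u + ereal (\<beta> / 2 * (norm (A *v x (Suc i) + B *v u + C *v z i - b
                   - (1 / \<beta>) *\<^sub>R (lam i - (\<tau> * \<beta>) *\<^sub>R (A *v x (Suc i) + B *v y i + C *v z i - b))))^2
                   + 1/2 * qn L1 (u - y i)))"
    and outer_z: "\<forall>i. z (Suc i) \<in> Z \<and>
        (\<forall>u\<in>Z. l (z (Suc i)) + ereal (\<beta> / 2 * (norm (A *v x (Suc i) + B *v y i + C *v z (Suc i) - b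
                   - (1 / \<beta>) *\<^sub>R (lam i - (\<tau> * \<beta>) *\<^sub>R (A *v x (Suc i) + B *v y i + C *v z i - b))))^2
                   + 1/2 * qn L2 (z (Suc i) - z i))
              \<le> l u + ereal (\<beta> / 2 * (norm (A *v x (Suc i) + B *v y i + C *v u - b
                   - (1 / \<beta>) *\<^sub>R (lam i - (\<tau> * \<beta>) *\<^sub>R (A *v x (Suc i) + B *v y i + C *v z i - b))))^2
                   + 1/2 * qn L2 (u - z i)))"
    and outer_lam: "\<forall>i. lam (Suc i) =
        (lam i - (\<tau> * \<beta>) *\<^sub>R (A *v x (Suc i) + B *v y i + C *v z i - b))
        - (s * \<beta>) *\<^sub>R (A *v x (Suc i) + B *v y (Suc i) + C *v z (Suc i) - b)"
    and \<eta>k: "0 < \<eta> k" "\<eta> k < 1 / \<nu>"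
  shows "\<forall>w \<in> X \<times> Y \<times> Z \<times> UNIV.
     (let wk = (x k, y k, z k, lam k);
          wt = (x (Suc k), y (Suc k), z (Suc k),
                lam k - \<beta> *\<^sub>R (A *v x (Suc k) + B *v y k + C *v z k - b));
          \<delta> = (\<lambda>t. gradf N gj (xhat (xin k) (xbin k) t)
                   - (gj (\<xi> k t) (xhat (xin k) (xbin k) t) + e k t))
      in Fobj (fbar N fj) g l w - Fobj (fbar N fj) g l wt + ereal ((w - wt) \<bullet> Jop A B C b w)
         \<ge> ereal ((w - wt) \<bullet> Qmul (M k - \<beta> *\<^sub>R (transpose A ** A)) L1 L2 B C \<beta> \<tau> (wk - wt)
                  + zeta H \<nu> (\<eta> k) (m k) (xb k) (xb (Suc k)) \<delta> (xbin k) (fst w)))"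
proof -
  have conv: "\<forall>u\<in>X. \<forall>v\<in>X. fbar N fj u + gradf N gj u \<bullet> (v - u) \<le> fbar N fj v"
    using convex_on_gradient_ineq fj_convex fj_deriv U by (blast intro: fbar_gradient_ineq)
  have desc: "\<forall>u\<in>X. \<forall>v\<in>X. fbar N fj v \<le> fbar N fj u + gradf N gj u \<bullet> (v - u) + \<nu> / 2 * qn H (v - u)"
    using descent_lemma[OF X(3) U(2) _ _ _ H \<nu>] fj_deriv Lip by (blast intro: fbar_descent_ineq[OF N])
  have M: "symmetric_mat (M k)" "psd (M k)" using params psd_of_psd_diff[of "M k" \<beta> A] \<beta> by auto
  have mem: "\<forall>t\<in>{1..m k + 1}. xin k t \<in> X \<and> xbin k t \<in> X"
    by (rule nested_iterates_in_set[OF X(3) init(1,4) inner_init _ outer_x]) (use inner_step in blast)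
  have x_opt: "\<forall>u\<in>X. fbar N fj u - fbar N fj (x (Suc k)) + (u - x (Suc k)) \<bullet> (M k *v (x (Suc k) - x k)
      - transpose A *v (lam k - \<beta> *\<^sub>R (A *v x k + B *v y k + C *v z k - b)))
      \<ge> zeta H \<nu> (\<eta> k) (m k) (xb k) (xb (Suc k))
          (\<lambda>t. gradf N gj (xhat (xin k) (xbin k) t) - (gj (\<xi> k t) (xhat (xin k) (xbin k) t) + e k t))
          (xbin k) u"
    using xsub_output_bound[OF X(3) conv desc H M \<nu> \<eta>k _ _ _ mem] inner_step params inner_init outer_x
    by simp
  have regroup: "a + v + c - d - r = v + (a + c - d - r)" "a + c + v - d - r = v + (a + c - d - r)"
    for a v c d r :: "real^'m" by (simp_all add: algebra_simps)
  obtain gy where y_opt: "g (y (Suc k)) = ereal gy" "\<forall>u\<in>Y. ereal (gy - (u - y (Suc k)) \<bullet> (\<beta> *\<^sub>R (transpose B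
      *v (B *v y (Suc k) + (A *v x (Suc k) + C *v z k - b - (1 / \<beta>) *\<^sub>R (lam k - (\<tau> * \<beta>) *\<^sub>R
      (A *v x (Suc k) + B *v y k + C *v z k - b))))) + L1 *v (y (Suc k) - y k))) \<le> g u"
    using prox_linearized_optimality[OF _ g L(1)] Y outer_y unfolding regroup(1) by blast
  obtain gz where z_opt: "l (z (Suc k)) = ereal gz" "\<forall>u\<in>Z. ereal (gz - (u - z (Suc k)) \<bullet> (\<beta> *\<^sub>R (transpose C
      *v (C *v z (Suc k) + (A *v x (Suc k) + B *v y k - b - (1 / \<beta>) *\<^sub>R (lam k - (\<tau> * \<beta>) *\<^sub>R
      (A *v x (Suc k) + B *v y k + C *v z k - b))))) + L2 *v (z (Suc k) - z k))) \<le> l u"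
    using prox_linearized_optimality[OF _ l L(2)] Z outer_z unfolding regroup(2) by blast
  show ?thesis
    unfolding Let_def using variational_inequality_of_block_optimality[OF \<beta> x_opt y_opt z_opt] by simp
qed

end
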